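(* Let $\mathrm{M}=\langle e_1+I,\ e_2+I\rangle$ and let $$A=\begin{pmatrix}-1&0\\0&1\end{pmatrix},\quad B=\begin{pmatrix}-1&1\\0&1\end{pmatrix},\quad C=\begin{pmatrix}0&1\\1&0\end{pmatrix}.$$ Let $\kappa=(k+K)_\star$ be an element of $\mathrm{Aff}(\mathrm{M})$ such that $K$ has finite order. Then $K$ is conjugate in $\mathrm{GL}(2,\mathbb Z)$ to exactly one of $I,-I,A,C,(BC)^2,AC$ or $BC$. Moreover, with conjugacy of $\kappa$ taken in $\mathrm{Aff}(\mathrm{M})$: (1) If $K=I$ and $\kappa$ has order 2, then $\kappa\in\mathrm{K}_2$ and $\kappa$ is conjugate to $(e_1/2+I)_\star$, where $\mathrm{K}_2=\{I_\star,(e_1/2+I)_\star,(e_2/2+I)_\star,(e_1/2+e_2/2+I)_\star\}$. (2) If $K=-I$, then $\kappa$ is conjugate to $(-I)_\star$. (3) If $K$ is conjugate to $A$ and $\kappa$ has order 2, then $\kappa$ is conjugate to exactly one of $A_\star$ or $(e_2/2+A)_\star$. (4) If $K$ is conjugate to $C$ and $\kappa$ has order 2, then $\kappa$ is conjugate to $C_\star$. (5) If $K$ is conjugate to $(BC)^2$, then $\kappa$ is conjugate to $((BC)^2)_\star$. (6) If $K$ is conjugate to $AC$, then $\kappa$ is conjugate to $(AC)_\star$. (7) If $K$ is conjugate to $BC$, then $\kappa$ is conjugate to $(BC)_\star$.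
   Context: $e_1,e_2$ are the standard basis vectors of $E^2$. Affine maps of $E^2$ are written $a+A$ ($x\mapsto a+Ax$); $a+I$ is translation by $a$. The normalizer $N_A(\mathrm{M})$ of $\mathrm{M}$ in the affine group of $E^2$ consists of all $a+A$ with $a\in E^2$, $A\in\mathrm{GL}(2,\mathbb Z)$. Each $a+A\in N_A(\mathrm{M})$ induces an affinity $(a+A)_\star:\mathrm{M}x\mapsto\mathrm{M}(a+Ax)$ of the torus $E^2/\mathrm{M}$; $\mathrm{Aff}(\mathrm{M})$ is the group of all such affinities, and the linear part $K$ of $\kappa=(k+K)_\star$ is well defined. *)

theory Defs
  imports "HOL-Analysis.Analysis"
begin

text \<open>The translation lattice M = <e1+I, e2+I>, i.e. the integer points of E^2.\<close>
definition latt :: "(real^2) set" where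
  "latt = {z. \<forall>i. z $ i \<in> \<int>}"

text \<open>The point M x of the torus E^2/M, represented as the coset x + Z^2.\<close>
definition tpt :: "real^2 \<Rightarrow> (real^2) set" where
  "tpt x = {x + z | z. z \<in> latt}"

definition torus :: "(real^2) set set" where
  "torus = range tpt"

definition int_matrix :: "real^2^2 \<Rightarrow> bool" where
  "int_matrix A \<longleftrightarrow> (\<forall>i j. A $ i $ j \<in> \<int>)"

definition GL2Z :: "real^2^2 \<Rightarrow> bool" where
  "GL2Z A \<longleftrightarrow> int_matrix A \<and> invertible A \<and> int_matrix (matrix_inv A)"

text \<open>The induced affinity (a+A)_* : M x \<mapsto> M (a + A x) of the torus.\<close>
definition aff_star :: "real^2 \<Rightarrow> real^2^2 \<Rightarrow> (real^2) set \<Rightarrow> (real^2) set" where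
  "aff_star a A = restrict (\<lambda>p. tpt (a + A *v (SOME x. x \<in> p))) torus"

definition Aff :: "((real^2) set \<Rightarrow> (real^2) set) set" where
  "Aff = {aff_star a A | a A. GL2Z A}"

definition aff_conj :: "((real^2) set \<Rightarrow> (real^2) set) \<Rightarrow> ((real^2) set \<Rightarrow> (real^2) set) \<Rightarrow> bool" where
  "aff_conj \<kappa> \<phi> \<longleftrightarrow> (\<exists>\<psi> \<psi>'. \<psi> \<in> Aff \<and> \<psi>' \<in> Aff \<and>
      (\<forall>p\<in>torus. \<psi>' (\<psi> p) = p \<and> \<psi> (\<psi>' p) = p) \<and>
      (\<forall>p\<in>torus. \<kappa> p = \<psi> (\<phi> (\<psi>' p))))"

definition aff_order2 :: "((real^2) set \<Rightarrow> (real^2) set) \<Rightarrow> bool" where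
  "aff_order2 \<kappa> \<longleftrightarrow> (\<forall>p\<in>torus. \<kappa> (\<kappa> p) = p) \<and> \<not> (\<forall>p\<in>torus. \<kappa> p = p)"

definition mat_conj :: "real^2^2 \<Rightarrow> real^2^2 \<Rightarrow> bool" where
  "mat_conj K X \<longleftrightarrow> (\<exists>P. GL2Z P \<and> K = P ** X ** matrix_inv P)"

definition mpow :: "real^2^2 \<Rightarrow> nat \<Rightarrow> real^2^2" where
  "mpow K n = (((**) K) ^^ n) (mat 1)"

definition e1 :: "real^2" where "e1 = axis 1 1"
definition e2 :: "real^2" where "e2 = axis 2 1"

definition mA :: "real^2^2" where "mA = vector [vector [-1, 0], vector [0, 1]]"
definition mB :: "real^2^2" where "mB = vector [vector [-1, 1], vector [0, 1]]"
definition mC :: "real^2^2" where "mC = vector [vector [0, 1], vector [1, 0]]"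

definition K2 :: "((real^2) set \<Rightarrow> (real^2) set) set" where
  "K2 = {aff_star 0 (mat 1), aff_star ((1/2) *\<^sub>R e1) (mat 1),
         aff_star ((1/2) *\<^sub>R e2) (mat 1), aff_star ((1/2) *\<^sub>R e1 + (1/2) *\<^sub>R e2) (mat 1)}"

end

theory Submission
  imports Defs
begin

text \<open>
  Write \<open>t\<close> and \<open>\<delta> = \<plusminus>1\<close> for trace and determinant of \<open>K \<in> GL(2,\<int>)\<close>. By Cayley--Hamilton,
  \<open>K\<^sup>n = U\<^sub>n K - \<delta> U\<^sub>n\<^sub>-\<^sub>1 I\<close> with the Lucas sequence \<open>U\<close> of \<open>(t, \<delta>)\<close>. If \<open>U\<^sub>n \<noteq> 0\<close>, then
  \<open>K\<^sup>n = I\<close> forces \<open>K = \<plusminus>I\<close>; and \<open>U\<^sub>n\<close> grows in absolute value, so it never returns to \<open>0\<close>,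
  unless \<open>\<delta> = -1, t = 0\<close> or \<open>\<delta> = 1, |t| \<le> 1\<close>.
  For these, a Euclidean reduction by shears and the swap of coordinates conjugates \<open>K\<close> to one of
  the seven normal forms, which are told apart by trace and determinant, and \<open>A\<close> from \<open>C\<close> by
  the parity of the determinant of a would-be conjugator.

  Conjugating \<open>(k + K)\<^sub>\<star>\<close> by \<open>(P s + P)\<^sub>\<star>\<close> with \<open>K P = P X\<close> changes \<open>P\<^sup>-\<^sup>1 k\<close> by \<open>(I - X) s\<close>
  modulo \<open>\<int>\<^sup>2\<close>. If \<open>I - X\<close> is invertible the translation part disappears. Otherwise the order-2
  condition \<open>k + K k \<in> \<int>\<^sup>2\<close> leaves only half-lattice translations, and \<open>A\<^sub>\<star>\<close> is separated
  from \<open>(e\<^sub>2/2 + A)\<^sub>\<star>\<close> by having a fixed point.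
\<close>

section \<open>Integral conjugacy\<close>

lemma matrix_inv_unique:
  fixes A :: "'a::semiring_1^'n^'m" and B :: "'a^'m^'n"
  assumes "A ** B = mat 1" "B ** A = mat 1"
  shows "matrix_inv A = B"
proof -
  have inv: "A ** matrix_inv A = mat 1 \<and> matrix_inv A ** A = mat 1"
    unfolding matrix_inv_def by (rule someI[of _ B]) (use assms in blast)
  have "matrix_inv A = matrix_inv A ** (A ** B)" using assms(1) by simp
  also have "\<dots> = B" using inv by (simp add: matrix_mul_assoc)
  finally show ?thesis .
qed

lemma matrix_inv_right: "invertible A \<Longrightarrow> A ** matrix_inv A = mat 1"
  and matrix_inv_left: "invertible A \<Longrightarrow> matrix_inv A ** A = mat 1"
  unfolding invertible_def matrix_inv_def by (metis (mono_tags, lifting) someI_ex)+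

lemma matrix_eq_iff_2:
  "(A :: 'a^2^2) = B \<longleftrightarrow> A$1$1 = B$1$1 \<and> A$1$2 = B$1$2 \<and> A$2$1 = B$2$1 \<and> A$2$2 = B$2$2"
  by (auto simp: vec_eq_iff forall_2)

lemma matrix_mult_nth_2: "((A :: 'a::semiring_1^2^2) ** B) $ i $ j = A$i$1 * B$1$j + A$i$2 * B$2$j"
  by (simp add: matrix_matrix_mult_def sum_2)

lemma matrix_vector_mult_nth_2: "((A :: 'a::semiring_1^2^2) *v x) $ i = A$i$1 * x$1 + A$i$2 * x$2"
  by (simp add: matrix_vector_mult_def sum_2)

lemma matrix_vector_mult_minus_right: "(A :: 'a::ring_1^'n^'m) *v (- x) = - (A *v x)"
  by (simp add: vec_eq_iff matrix_vector_mult_def sum_negf)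

lemma int_matrix_mult: "int_matrix A \<Longrightarrow> int_matrix B \<Longrightarrow> int_matrix (A ** B)"
  unfolding int_matrix_def by (simp add: matrix_matrix_mult_def sum_2 Ints_add Ints_mult)

lemma int_matrix_mat_1: "int_matrix (mat 1)"
  unfolding int_matrix_def by (simp add: mat_def)

lemma GL2Z_iff_int_inverse:
  "GL2Z P \<longleftrightarrow> (\<exists>Q. int_matrix P \<and> int_matrix Q \<and> P ** Q = mat 1 \<and> Q ** P = mat 1)"
  unfolding GL2Z_def invertible_def
  by (metis matrix_inv_unique)

lemma GL2Z_matrix_inv: "GL2Z P \<Longrightarrow> GL2Z (matrix_inv P)"
  unfolding GL2Z_iff_int_inverse
  by (metis GL2Z_def GL2Z_iff_int_inverse invertible_def matrix_inv_left matrix_inv_right)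

lemma GL2Z_mult:
  assumes "GL2Z P" "GL2Z P'"
  shows "GL2Z (P ** P')"
proof -
  obtain Q Q' where Q: "int_matrix P" "int_matrix Q" "P ** Q = mat 1" "Q ** P = mat 1"
    and Q': "int_matrix P'" "int_matrix Q'" "P' ** Q' = mat 1" "Q' ** P' = mat 1"
    using assms unfolding GL2Z_iff_int_inverse by blast
  have "(P ** P') ** (Q' ** Q) = mat 1"
    by (metis Q(3) Q'(3) matrix_mul_assoc matrix_mul_rid)
  moreover have "(Q' ** Q) ** (P ** P') = mat 1"
    by (metis Q(4) Q'(4) matrix_mul_assoc matrix_mul_rid)
  ultimately show ?thesis unfolding GL2Z_iff_int_inverse using Q Q' int_matrix_mult by blast
qed

lemma GL2Z_mat_1: "GL2Z (mat 1)"
  unfolding GL2Z_iff_int_inverse using int_matrix_mat_1 by auto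

lemma mat_conj_iff: "mat_conj K X \<longleftrightarrow> (\<exists>P. GL2Z P \<and> K ** P = P ** X)"
proof
  assume "mat_conj K X"
  then obtain P where P: "GL2Z P" "K = P ** X ** matrix_inv P"
    unfolding mat_conj_def by blast
  then have "K ** P = P ** X"
    by (metis GL2Z_def matrix_inv_left matrix_mul_assoc matrix_mul_rid)
  then show "\<exists>P. GL2Z P \<and> K ** P = P ** X" using P(1) by blast
next
  assume "\<exists>P. GL2Z P \<and> K ** P = P ** X"
  then obtain P where P: "GL2Z P" "K ** P = P ** X" by blast
  then have "K = P ** X ** matrix_inv P"
    by (metis GL2Z_def matrix_inv_right matrix_mul_assoc matrix_mul_rid)
  then show "mat_conj K X" unfolding mat_conj_def using P(1) by blast
qed

lemma mat_conj_refl: "mat_conj K K"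
  unfolding mat_conj_iff using GL2Z_mat_1 by auto

lemma mat_conj_sym:
  assumes "mat_conj K X"
  shows "mat_conj X K"
proof -
  obtain P where P: "GL2Z P" "K ** P = P ** X" using assms unfolding mat_conj_iff by blast
  have inv: "P ** matrix_inv P = mat 1" "matrix_inv P ** P = mat 1"
    using P(1) unfolding GL2Z_def by (simp_all add: matrix_inv_left matrix_inv_right)
  have "X ** matrix_inv P = matrix_inv P ** (P ** X) ** matrix_inv P"
    using inv by (simp add: matrix_mul_assoc)
  also have "\<dots> = matrix_inv P ** K ** (P ** matrix_inv P)"
    by (simp flip: P(2) add: matrix_mul_assoc)
  also have "\<dots> = matrix_inv P ** K"
    using inv by simp
  finally show ?thesis
    unfolding mat_conj_iff using GL2Z_matrix_inv[OF P(1)] by blast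
qed

lemma mat_conj_trans:
  assumes "mat_conj K X" "mat_conj X Y"
  shows "mat_conj K Y"
proof -
  obtain P P' where P: "GL2Z P" "K ** P = P ** X" and P': "GL2Z P'" "X ** P' = P' ** Y"
    using assms unfolding mat_conj_iff by blast
  then have "K ** (P ** P') = (P ** P') ** Y"
    by (metis matrix_mul_assoc)
  then show ?thesis unfolding mat_conj_iff using GL2Z_mult[OF P(1) P'(1)] by blast
qed

lemma mat_conj_int_matrix: "mat_conj K X \<Longrightarrow> int_matrix X \<Longrightarrow> int_matrix K"
  unfolding mat_conj_def GL2Z_def by (metis int_matrix_mult)

lemma mat_conj_det:
  assumes "mat_conj K X"
  shows "det K = det X"
proof -
  obtain P where "GL2Z P" "K ** P = P ** X" using assms unfolding mat_conj_iff by blast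
  then have "det K * det P = det X * det P" "det P \<noteq> 0"
    by (metis det_mul mult.commute, metis GL2Z_def invertible_det_nz)
  then show ?thesis by simp
qed

lemma mat_conj_trace:
  assumes "mat_conj K X"
  shows "trace K = trace X"
proof -
  obtain P where P: "GL2Z P" "K = P ** X ** matrix_inv P" using assms unfolding mat_conj_def by blast
  have "trace K = trace (X ** matrix_inv P ** P)"
    using P(2) by (metis matrix_mul_assoc trace_mul_sym)
  also have "\<dots> = trace X"
    using P(1) unfolding GL2Z_def by (simp add: matrix_mul_assoc[symmetric] matrix_inv_left)
  finally show ?thesis .
qed

section \<open>Integer \<open>2 \<times> 2\<close> matrices\<close>

definition imat :: "int \<Rightarrow> int \<Rightarrow> int \<Rightarrow> int \<Rightarrow> real^2^2" where
  "imat a b c d = vector [vector [of_int a, of_int b], vector [of_int c, of_int d]]"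

lemma imat_nth [simp]:
  "imat a b c d $ 1 $ 1 = of_int a" "imat a b c d $ 1 $ 2 = of_int b"
  "imat a b c d $ 2 $ 1 = of_int c" "imat a b c d $ 2 $ 2 = of_int d"
  by (simp_all add: imat_def)

lemma imat_eq_iff [simp]: "imat a b c d = imat a' b' c' d' \<longleftrightarrow> a = a' \<and> b = b' \<and> c = c' \<and> d = d'"
  by (simp add: matrix_eq_iff_2)

lemma imat_mult [simp]:
  "imat a b c d ** imat a' b' c' d' = imat (a*a' + b*c') (a*b' + b*d') (c*a' + d*c') (c*b' + d*d')"
  by (simp add: matrix_eq_iff_2 matrix_mult_nth_2)

lemma mat_1_eq_imat: "mat 1 = imat 1 0 0 1"
  by (simp add: matrix_eq_iff_2 mat_def)

lemma imat_uminus [simp]: "- imat a b c d = imat (- a) (- b) (- c) (- d)"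
  by (simp add: matrix_eq_iff_2)

lemma imat_diff [simp]: "imat a b c d - imat a' b' c' d' = imat (a - a') (b - b') (c - c') (d - d')"
  by (simp add: matrix_eq_iff_2)

lemma det_imat: "det (imat a b c d) = of_int (a*d - b*c)"
  by (simp add: det_2)

lemma trace_imat: "trace (imat a b c d) = of_int (a + d)"
  by (simp add: trace_def sum_2)

lemma int_matrix_imat [simp]: "int_matrix (imat a b c d)"
  unfolding int_matrix_def by (simp add: forall_2)

lemma int_matrixE:
  assumes "int_matrix K"
  obtains a b c d where "K = imat a b c d"
proof -
  obtain a b c d where "K$1$1 = of_int a" "K$1$2 = of_int b" "K$2$1 = of_int c" "K$2$2 = of_int d"
    using assms unfolding int_matrix_def by (metis Ints_cases)
  then have "K = imat a b c d" by (simp add: matrix_eq_iff_2)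
  then show thesis by (rule that)
qed

lemma imat_mult_adjugate:
  assumes "a*d - b*c = \<delta>" "\<bar>\<delta>\<bar> = 1"
  shows "imat a b c d ** imat (\<delta>*d) (-\<delta>*b) (-\<delta>*c) (\<delta>*a) = mat 1"
    and "imat (\<delta>*d) (-\<delta>*b) (-\<delta>*c) (\<delta>*a) ** imat a b c d = mat 1"
proof -
  have "\<delta> * \<delta> = 1" using assms(2) by (metis abs_mult_self_eq mult_1)
  then have "\<delta> * (a*d - b*c) = 1" using assms(1) by simp
  then show "imat a b c d ** imat (\<delta>*d) (-\<delta>*b) (-\<delta>*c) (\<delta>*a) = mat 1"
    and "imat (\<delta>*d) (-\<delta>*b) (-\<delta>*c) (\<delta>*a) ** imat a b c d = mat 1"
    unfolding mat_1_eq_imat by (simp_all add: algebra_simps)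
qed

lemma GL2Z_imat_iff: "GL2Z (imat a b c d) \<longleftrightarrow> \<bar>a*d - b*c\<bar> = 1"
proof
  assume "GL2Z (imat a b c d)"
  then obtain Q where Q: "int_matrix Q" "imat a b c d ** Q = mat 1"
    unfolding GL2Z_iff_int_inverse by blast
  obtain a' b' c' d' where "Q = imat a' b' c' d'" using Q(1) by (rule int_matrixE)
  have "det (imat a b c d) * det Q = 1"
    using Q(2) by (metis det_I det_mul)
  then have "of_int ((a*d - b*c) * (a'*d' - b'*c')) = (of_int 1 :: real)"
    unfolding \<open>Q = imat a' b' c' d'\<close> det_imat of_int_mult by simp
  then have "(a*d - b*c) * (a'*d' - b'*c') = 1"
    by (simp only: of_int_eq_iff)
  then show "\<bar>a*d - b*c\<bar> = 1"
    by (auto simp: zmult_eq_1_iff)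
next
  assume "\<bar>a*d - b*c\<bar> = 1"
  from imat_mult_adjugate[OF refl this] show "GL2Z (imat a b c d)"
    unfolding GL2Z_iff_int_inverse using int_matrix_imat by blast
qed

lemma matrix_inv_imat:
  "a*d - b*c = \<delta> \<Longrightarrow> \<bar>\<delta>\<bar> = 1 \<Longrightarrow> matrix_inv (imat a b c d) = imat (\<delta>*d) (-\<delta>*b) (-\<delta>*c) (\<delta>*a)"
  using imat_mult_adjugate by (intro matrix_inv_unique)

lemma GL2Z_imatE:
  assumes "GL2Z K"
  obtains a b c d where "K = imat a b c d" "\<bar>a*d - b*c\<bar> = 1"
  using assms GL2Z_imat_iff by (metis GL2Z_def int_matrixE)

lemma mat_conj_imatI:
  "\<bar>p * t - q * r\<bar> = 1 \<Longrightarrow> K ** imat p q r t = imat p q r t ** X \<Longrightarrow> mat_conj K X"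
  unfolding mat_conj_iff GL2Z_imat_iff[symmetric] by blast

lemma mat_conj_shear:
  "mat_conj (imat a b c d) (imat (a + j*c) (b + j*(d - a) - j^2*c) c (d - j*c))"
  by (rule mat_conj_imatI[where p = 1 and q = "-j" and r = 0 and t = 1])
    (simp_all add: algebra_simps power2_eq_square)

lemma mat_conj_swap: "mat_conj (imat a b c d) (imat d c b a)"
  by (rule mat_conj_imatI[where p = 0 and q = 1 and r = 1 and t = 0]) simp_all

lemma mA_eq_imat: "mA = imat (-1) 0 0 1"
  and mB_eq_imat: "mB = imat (-1) 1 0 1"
  and mC_eq_imat: "mC = imat 0 1 1 0"
  by (simp_all add: matrix_eq_iff_2 mA_def mB_def mC_def)

lemma int_matrix_mA: "int_matrix mA"
  and int_matrix_mC: "int_matrix mC"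
  by (simp_all add: mA_eq_imat mC_eq_imat)

lemma mat_conj_imat_det:
  "mat_conj (imat a b c d) (imat a' b' c' d') \<Longrightarrow> a*d - b*c = a'*d' - b'*c'"
  by (metis det_imat mat_conj_det of_int_eq_iff)

section \<open>Finite-order elements of \<open>GL(2,\<int>)\<close>\<close>

lemma exists_small_shift:
  fixes a c :: int
  assumes "c \<noteq> 0"
  shows "\<exists>j. 2 * \<bar>a + j * c\<bar> \<le> \<bar>c\<bar>"
proof -
  define m where "m = \<bar>c\<bar>"
  have "m > 0" using assms by (simp add: m_def)
  define q r where "q = (2*a + m) div (2*m)" and "r = (2*a + m) mod (2*m)"
  have "0 \<le> r" "r < 2*m" using \<open>m > 0\<close> by (simp_all add: r_def)
  moreover have "2 * (a - q * m) = r - m"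
    using div_mult_mod_eq[of "2*a + m" "2*m"] by (simp add: q_def r_def algebra_simps)
  ultimately have "2 * \<bar>a - q * m\<bar> \<le> m" by linarith
  moreover have "a + (- q * sgn c) * c = a - q * m" by (simp add: m_def sgn_if abs_if)
  ultimately have "2 * \<bar>a + (- q * sgn c) * c\<bar> \<le> \<bar>c\<bar>" by (simp only: m_def)
  then show ?thesis by blast
qed

lemma reduced_entry_bound:
  fixes a b c t :: int
  assumes "\<bar>t\<bar> \<le> 1" "\<bar>a*(t-a) - b*c\<bar> = 1" "2*\<bar>a\<bar> \<le> \<bar>c\<bar>" "2 \<le> \<bar>c\<bar>"
  shows "\<bar>b\<bar> < \<bar>c\<bar>"
proof (rule ccontr)
  assume "\<not> \<bar>b\<bar> < \<bar>c\<bar>"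
  then have "\<bar>c\<bar> * \<bar>c\<bar> \<le> \<bar>b*c\<bar>"
    unfolding abs_mult by (intro mult_right_mono) auto
  also have "\<bar>b*c\<bar> \<le> \<bar>a*(t-a)\<bar> + 1" using assms(2) by linarith
  also have "\<bar>a*(t-a)\<bar> \<le> \<bar>a\<bar> * (\<bar>a\<bar> + 1)"
    unfolding abs_mult using assms(1) by (intro mult_left_mono) auto
  finally have "\<bar>c\<bar> * \<bar>c\<bar> \<le> \<bar>a\<bar> * \<bar>a\<bar> + \<bar>a\<bar> + 1" by (simp add: algebra_simps)
  moreover have "(2*\<bar>a\<bar>) * (2*\<bar>a\<bar>) \<le> \<bar>c\<bar> * \<bar>c\<bar>" using assms(3) by (intro mult_mono) auto
  moreover have "2 * \<bar>c\<bar> \<le> \<bar>c\<bar> * \<bar>c\<bar>" using assms(4) by (intro mult_right_mono) auto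
  ultimately show False using assms(3,4) by linarith
qed

text \<open>Alternately shearing (to get \<open>2|a| \<le> |c|\<close>) and swapping strictly decreases \<open>|c|\<close>
  as long as \<open>|c| \<ge> 2\<close>; this needs \<open>|t| \<le> 1\<close>.\<close>
lemma conj_reduced_form:
  fixes t :: int
  assumes "\<bar>t\<bar> \<le> 1" "\<bar>a*(t-a) - b*c\<bar> = 1"
  shows "\<exists>a' b' c'. mat_conj (imat a b c (t-a)) (imat a' b' c' (t-a')) \<and> (c' = 0 \<or> a' = 0 \<and> \<bar>c'\<bar> = 1)"
  using assms(2)
proof (induction "nat \<bar>c\<bar>" arbitrary: a b c rule: less_induct)
  case less
  show ?case
  proof (cases "c = 0")
    case True
    then show ?thesis using mat_conj_refl by blast
  next
    case False
    then obtain j where j: "2 * \<bar>a + j*c\<bar> \<le> \<bar>c\<bar>" using exists_small_shift by blast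
    define a' b' where "a' = a + j*c" and "b' = b + j*((t-a) - a) - j^2*c"
    have shear: "mat_conj (imat a b c (t-a)) (imat a' b' c (t-a'))"
      using mat_conj_shear[of a b c "t-a" j] by (simp add: a'_def b'_def algebra_simps)
    have det: "a'*(t-a') - b'*c = a*(t-a) - b*c"
      by (simp add: a'_def b'_def algebra_simps power2_eq_square)
    show ?thesis
    proof (cases "\<bar>c\<bar> = 1")
      case True
      then have "2 * \<bar>a'\<bar> \<le> 1" using j by (simp add: a'_def)
      then have "a' = 0" by arith
      then show ?thesis using shear True by blast
    next
      case False
      then have "\<bar>b'\<bar> < \<bar>c\<bar>"
        using reduced_entry_bound[of t a' b' c] assms(1) less.prems det j \<open>c \<noteq> 0\<close>
        by (simp add: a'_def)
      moreover have "\<bar>(t-a') * (t - (t-a')) - c * b'\<bar> = 1" using less.prems det by (simp add: algebra_simps)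
      ultimately obtain a'' b'' c'' where
        "mat_conj (imat (t-a') c b' (t - (t-a'))) (imat a'' b'' c'' (t-a''))" "c'' = 0 \<or> a'' = 0 \<and> \<bar>c''\<bar> = 1"
        using less.hyps[of b' "t-a'" c] \<open>c \<noteq> 0\<close> by auto
      moreover have "mat_conj (imat a' b' c (t-a')) (imat (t-a') c b' (t - (t-a')))"
        using mat_conj_swap by simp
      ultimately show ?thesis using shear mat_conj_trans by blast
    qed
  qed
qed

lemma triangular_reflection_conj_mA_or_mC:
  assumes "a*a = 1"
  shows "mat_conj (imat a b 0 (-a)) mA \<or> mat_conj (imat a b 0 (-a)) mC"
proof -
  have a: "a = 1 \<or> a = -1" using assms zmult_eq_1_iff by blast
  have "mat_conj (imat a b 0 (-a)) (imat a (b mod 2) 0 (-a))"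
    using mat_conj_shear[of a b 0 "-a" "a * (b div 2)"] a
    by (auto simp: algebra_simps minus_mult_div_eq_mod)
  moreover have "mat_conj (imat a (b mod 2) 0 (-a)) mA \<or> mat_conj (imat a (b mod 2) 0 (-a)) mC"
  proof -
    have "b mod 2 = 0 \<or> b mod 2 = 1" by auto
    moreover have "mat_conj (imat 1 0 0 (-1)) mA" using mat_conj_swap[of 1 0 0 "-1"] by (simp add: mA_eq_imat)
    moreover have "mat_conj (imat (-1) 0 0 1) mA" by (simp add: mA_eq_imat mat_conj_refl)
    moreover have "mat_conj (imat 1 1 0 (-1)) mC"
      by (rule mat_conj_imatI[where p = 1 and q = 0 and r = "-1" and t = 1]) (simp_all add: mC_eq_imat)
    moreover have "mat_conj (imat (-1) 1 0 1) mC"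
      by (rule mat_conj_imatI[where p = 1 and q = 0 and r = 1 and t = 1]) (simp_all add: mC_eq_imat)
    ultimately show ?thesis using a by auto
  qed
  ultimately show ?thesis using mat_conj_trans by blast
qed

lemma reflection_conj_mA_or_mC:
  assumes "a*a + b*c = 1"
  shows "mat_conj (imat a b c (-a)) mA \<or> mat_conj (imat a b c (-a)) mC"
proof -
  obtain a' b' c' where conj: "mat_conj (imat a b c (0-a)) (imat a' b' c' (0-a'))"
    and reduced: "c' = 0 \<or> a' = 0 \<and> \<bar>c'\<bar> = 1"
    using conj_reduced_form[of 0 a b c] assms by auto
  have det: "a'*a' + b'*c' = 1" using mat_conj_imat_det[OF conj] assms by simp
  from reduced have "mat_conj (imat a' b' c' (-a')) mA \<or> mat_conj (imat a' b' c' (-a')) mC"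
  proof
    assume "c' = 0"
    then show ?thesis using triangular_reflection_conj_mA_or_mC det by simp
  next
    assume "a' = 0 \<and> \<bar>c'\<bar> = 1"
    then have "a' = 0 \<and> (b' = 1 \<and> c' = 1 \<or> b' = -1 \<and> c' = -1)" using det zmult_eq_1_iff by auto
    moreover have "mat_conj (imat 0 (-1) (-1) 0) mC"
      by (rule mat_conj_imatI[where p = "-1" and q = 0 and r = 0 and t = 1]) (simp_all add: mC_eq_imat)
    ultimately show ?thesis by (auto simp: mC_eq_imat mat_conj_refl)
  qed
  then show ?thesis using conj mat_conj_trans by auto
qed

lemma elliptic_conj:
  assumes "\<bar>t\<bar> \<le> 1" "a*(t-a) - b*c = 1"
  shows "mat_conj (imat a b c (t-a)) (imat 0 (-1) 1 t)"
proof -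
  obtain a' b' c' where conj: "mat_conj (imat a b c (t-a)) (imat a' b' c' (t-a'))"
    and reduced: "c' = 0 \<or> a' = 0 \<and> \<bar>c'\<bar> = 1"
    using conj_reduced_form[of t a b c] assms by auto
  have det: "a'*(t-a') - b'*c' = 1" using mat_conj_imat_det[OF conj] assms(2) by simp
  have "c' \<noteq> 0"
  proof
    assume "c' = 0"
    then have "a' = 1 \<and> t - a' = 1 \<or> a' = -1 \<and> t - a' = -1" using det zmult_eq_1_iff by simp
    then show False using assms(1) by auto
  qed
  then have "a' = 0" "b' = -1 \<and> c' = 1 \<or> b' = 1 \<and> c' = -1"
    using reduced det zmult_eq_1_iff[of "- b'" c'] by auto
  moreover have "mat_conj (imat 0 1 (-1) t) (imat 0 (-1) 1 t)"
    by (rule mat_conj_imatI[where p = "-1" and q = 0 and r = 0 and t = 1]) simp_all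
  ultimately show ?thesis using conj mat_conj_trans by (auto simp: mat_conj_refl)
qed

fun lucas_U :: "int \<Rightarrow> int \<Rightarrow> nat \<Rightarrow> int" where
  "lucas_U t d 0 = 0"
| "lucas_U t d (Suc 0) = 1"
| "lucas_U t d (Suc (Suc n)) = t * lucas_U t d (Suc n) - d * lucas_U t d n"

text \<open>Cayley--Hamilton: \<open>K\<^sup>2 = t K - \<delta> I\<close>.\<close>
lemma mpow_imat:
  fixes a b c d :: int
  defines "t \<equiv> a + d" and "\<delta> \<equiv> a*d - b*c"
  shows "mpow (imat a b c d) (Suc n) =
    imat (lucas_U t \<delta> (Suc n) * a - \<delta> * lucas_U t \<delta> n) (lucas_U t \<delta> (Suc n) * b)
         (lucas_U t \<delta> (Suc n) * c) (lucas_U t \<delta> (Suc n) * d - \<delta> * lucas_U t \<delta> n)"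
proof (induction n)
  case 0
  then show ?case by (simp add: mpow_def mat_1_eq_imat)
next
  case (Suc n)
  have "mpow (imat a b c d) (Suc (Suc n)) = imat a b c d ** mpow (imat a b c d) (Suc n)"
    by (simp add: mpow_def)
  then show ?case unfolding Suc by (simp add: t_def \<delta>_def algebra_simps)
qed

lemma lucas_U_uminus: "lucas_U (- t) d n = (-1) ^ (n + 1) * lucas_U t d n"
  by (induction t d n rule: lucas_U.induct) (auto simp: algebra_simps)

lemma lucas_U_pos:
  assumes "d = -1 \<and> 1 \<le> t \<or> d = 1 \<and> 2 \<le> t"
  shows "0 \<le> lucas_U t d n \<and> lucas_U t d n \<le> lucas_U t d (Suc n) \<and> 0 < lucas_U t d (Suc n)"
proof (induction n)
  case 0
  then show ?case by simp
next
  case (Suc n)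
  then have x: "0 \<le> lucas_U t d (Suc n)" by simp
  from assms have "lucas_U t d (Suc n) \<le> lucas_U t d (Suc (Suc n))"
  proof (elim disjE conjE)
    assume "d = -1" "1 \<le> t"
    then have "lucas_U t d (Suc (Suc n)) = t * lucas_U t d (Suc n) + lucas_U t d n" by simp
    then show ?thesis using mult_right_mono[OF \<open>1 \<le> t\<close> x] Suc by linarith
  next
    assume "d = 1" "2 \<le> t"
    then have "lucas_U t d (Suc (Suc n)) = t * lucas_U t d (Suc n) - lucas_U t d n" by simp
    then show ?thesis using mult_right_mono[OF \<open>2 \<le> t\<close> x] Suc by linarith
  qed
  then show ?case using Suc by simp
qed

lemma lucas_U_eq_0_imp:
  assumes "\<bar>d\<bar> = 1" "lucas_U t d (Suc n) = 0"
  shows "d = -1 \<and> t = 0 \<or> d = 1 \<and> \<bar>t\<bar> \<le> 1"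
proof -
  have "lucas_U \<bar>t\<bar> d (Suc n) = 0"
    using assms(2) lucas_U_uminus[of t d "Suc n"] by (cases "t \<ge> 0") simp_all
  then have "\<not> (d = -1 \<and> 1 \<le> \<bar>t\<bar> \<or> d = 1 \<and> 2 \<le> \<bar>t\<bar>)"
    using lucas_U_pos[of d "\<bar>t\<bar>" n] by auto
  then show ?thesis using assms(1) by auto
qed

lemma finite_order_imat:
  assumes "\<bar>a*d - b*c\<bar> = 1" "n > 0" "mpow (imat a b c d) n = mat 1"
  shows "imat a b c d = mat 1 \<or> imat a b c d = - mat 1
    \<or> a + d = 0 \<and> a*d - b*c = -1 \<or> \<bar>a + d\<bar> \<le> 1 \<and> a*d - b*c = 1"
proof -
  obtain m where "n = Suc m" using assms(2) gr0_conv_Suc by blast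
  define \<delta> s s' where "\<delta> = a*d - b*c"
    and "s = lucas_U (a + d) \<delta> (Suc m)" and "s' = lucas_U (a + d) \<delta> m"
  have pow: "s * a - \<delta> * s' = 1" "s * b = 0" "s * c = 0" "s * d - \<delta> * s' = 1"
    using assms(3) mpow_imat[of a b c d m]
    unfolding \<open>n = Suc m\<close> \<delta>_def s_def s'_def mat_1_eq_imat by simp_all
  show ?thesis
  proof (cases "s = 0")
    case False
    moreover have "s * a = s * d" using pow by linarith
    ultimately have "b = 0" "c = 0" "a = d" using pow by auto
    moreover have "a*a = 1"
      using assms(1) \<open>b = 0\<close> \<open>a = d\<close> by (simp add: abs_mult_self_eq flip: abs_mult)
    then have "a = 1 \<or> a = -1" using zmult_eq_1_iff by blast
    ultimately show ?thesis by (auto simp: mat_1_eq_imat)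
  next
    case True
    then show ?thesis using lucas_U_eq_0_imp[of \<delta> "a + d" m] assms(1) unfolding s_def \<delta>_def by auto
  qed
qed

definition conj_reps :: "(real^2^2) list" where
  "conj_reps = [mat 1, - mat 1, mA, mC, (mB ** mC) ** (mB ** mC), mA ** mC, mB ** mC]"

lemma conj_reps_imat: "conj_reps = [imat 1 0 0 1, imat (-1) 0 0 (-1), imat (-1) 0 0 1, imat 0 1 1 0,
    imat 0 (-1) 1 (-1), imat 0 (-1) 1 0, imat 1 (-1) 1 0]"
  by (simp add: conj_reps_def mat_1_eq_imat mA_eq_imat mB_eq_imat mC_eq_imat)

lemma finite_order_conj_rep:
  assumes "GL2Z K" "\<exists>n>0. mpow K n = mat 1"
  shows "\<exists>X \<in> set conj_reps. mat_conj K X"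
proof -
  obtain a b c d where K: "K = imat a b c d" and det: "\<bar>a*d - b*c\<bar> = 1"
    using assms(1) by (rule GL2Z_imatE)
  obtain n where "n > 0" "mpow (imat a b c d) n = mat 1" using assms(2) K by blast
  from finite_order_imat[OF det this]
  consider "K = mat 1" | "K = - mat 1" | "a + d = 0" "a*d - b*c = -1" | "\<bar>a + d\<bar> \<le> 1" "a*d - b*c = 1"
    unfolding K[symmetric] by blast
  then show ?thesis
  proof cases
    case 1
    then show ?thesis by (simp add: conj_reps_def mat_conj_refl)
  next
    case 2
    then show ?thesis by (simp add: conj_reps_def mat_conj_refl)
  next
    case 3
    then have "d = -a" by simp
    moreover from \<open>d = -a\<close> 3(2) have "a*a + b*c = 1" by simp
    ultimately have "mat_conj K mA \<or> mat_conj K mC" using reflection_conj_mA_or_mC K by simp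
    then show ?thesis by (auto simp: conj_reps_def)
  next
    case 4
    then have conj: "mat_conj K (imat 0 (-1) 1 (a + d))" using elliptic_conj[of "a + d" a b c] K by simp
    have reps: "imat 0 (-1) 1 (-1) \<in> set conj_reps" "imat 0 (-1) 1 0 \<in> set conj_reps"
      "imat 1 (-1) 1 0 \<in> set conj_reps"
      by (simp_all add: conj_reps_imat)
    from 4 consider (neg) "a + d = -1" | (zero) "a + d = 0" | (pos) "a + d = 1" by linarith
    then show ?thesis
    proof cases
      case pos
      have "mat_conj (imat 0 (-1) 1 1) (imat 1 (-1) 1 0)"
        using mat_conj_shear[of 0 "-1" 1 1 1] by simp
      then show ?thesis using mat_conj_trans[OF conj[unfolded pos]] reps(3) by blast
    qed (use conj reps in auto)
  qed
qed

lemma not_mat_conj_mA_mC: "\<not> mat_conj mA mC"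
proof
  assume "mat_conj mA mC"
  then obtain P where "GL2Z P" "mA ** P = P ** mC" unfolding mat_conj_iff by blast
  obtain p q r t where P: "P = imat p q r t" "\<bar>p * t - q * r\<bar> = 1"
    using \<open>GL2Z P\<close> by (rule GL2Z_imatE)
  have "mA ** P = imat (-p) (-q) r t" "P ** mC = imat q p t r"
    by (simp_all add: P(1) mA_eq_imat mC_eq_imat)
  then have "imat (-p) (-q) r t = imat q p t r"
    using \<open>mA ** P = P ** mC\<close> by argo
  then have "q = -p" "r = t" unfolding imat_eq_iff by linarith+
  then have "p * t - q * r = 2 * (p * t)" by simp
  then have "\<bar>2 * (p * t)\<bar> = 1" using P(2) by argo
  moreover have "\<bar>2 * x\<bar> \<noteq> (1::int)" for x by presburger
  ultimately show False by blast
qed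

lemma conj_reps_trace_det:
  assumes "k < 7"
  shows "(trace (conj_reps ! k), det (conj_reps ! k)) = [(2, 1), (-2, 1), (0, -1), (0, -1), (-1, 1), (0, 1), (1, 1)] ! k"
proof -
  have "k = 0 \<or> k = 1 \<or> k = 2 \<or> k = 3 \<or> k = 4 \<or> k = 5 \<or> k = 6" using assms by arith
  then show ?thesis
    by (elim disjE) (simp_all add: conj_reps_imat trace_imat det_imat numeral_eq_Suc)
qed

lemma conj_reps_distinct:
  assumes "i < 7" "j < 7" "mat_conj (conj_reps ! i) (conj_reps ! j)"
  shows "i = j"
proof -
  have "[(2::real, 1::real), (-2, 1), (0, -1), (0, -1), (-1, 1), (0, 1), (1, 1)] ! i
      = [(2, 1), (-2, 1), (0, -1), (0, -1), (-1, 1), (0, 1), (1, 1)] ! j"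
    using conj_reps_trace_det[OF assms(1)] conj_reps_trace_det[OF assms(2)]
      mat_conj_trace[OF assms(3)] mat_conj_det[OF assms(3)] by simp
  moreover have "\<not> (i = 2 \<and> j = 3)" "\<not> (i = 3 \<and> j = 2)"
    using assms(3) not_mat_conj_mA_mC mat_conj_sym by (auto simp: conj_reps_def)
  moreover have "i = 0 \<or> i = 1 \<or> i = 2 \<or> i = 3 \<or> i = 4 \<or> i = 5 \<or> i = 6"
    and "j = 0 \<or> j = 1 \<or> j = 2 \<or> j = 3 \<or> j = 4 \<or> j = 5 \<or> j = 6"
    using assms(1,2) by arith+
  ultimately show ?thesis by (elim disjE) (simp_all add: numeral_eq_Suc)
qed

lemma card_conj_reps_eq_1:
  assumes "GL2Z K" "\<exists>n>0. mpow K n = mat 1"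
  shows "card {i. i < 7 \<and> mat_conj K (conj_reps ! i)} = 1"
proof -
  have "length conj_reps = 7" by (simp add: conj_reps_def)
  then obtain i where i: "i < 7" "mat_conj K (conj_reps ! i)"
    using finite_order_conj_rep[OF assms] by (metis in_set_conv_nth)
  have "j = i" if "j < 7" "mat_conj K (conj_reps ! j)" for j
    using conj_reps_distinct[OF i(1) that(1)] mat_conj_sym mat_conj_trans i(2) that(2) by metis
  then have "{i. i < 7 \<and> mat_conj K (conj_reps ! i)} = {i}" using i by blast
  then show ?thesis by simp
qed

section \<open>Affinities of the torus\<close>

lemma Ints_minus_half:
  fixes u :: real
  assumes "2 * u \<in> \<int>" "u \<notin> \<int>"
  shows "u - 1/2 \<in> \<int>"
proof -
  obtain m where m: "2 * u = of_int m" using assms(1) by (rule Ints_cases)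
  have "odd m"
  proof
    assume "even m"
    then obtain j where "m = 2 * j" by blast
    then have "u = of_int j" using m by simp
    then show False using assms(2) by simp
  qed
  then obtain j where "m = 2 * j + 1" by (rule oddE)
  then have "u - 1/2 = of_int j" using m by (simp add: field_simps)
  then show ?thesis by simp
qed

lemma mem_latt_iff: "z \<in> latt \<longleftrightarrow> z$1 \<in> \<int> \<and> z$2 \<in> \<int>"
  unfolding latt_def by (simp add: forall_2)

lemma zero_mem_latt: "0 \<in> latt"
  and add_mem_latt: "x \<in> latt \<Longrightarrow> y \<in> latt \<Longrightarrow> x + y \<in> latt"
  and diff_mem_latt: "x \<in> latt \<Longrightarrow> y \<in> latt \<Longrightarrow> x - y \<in> latt"
  and int_matrix_mult_mem_latt: "int_matrix A \<Longrightarrow> x \<in> latt \<Longrightarrow> A *v x \<in> latt"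
  unfolding mem_latt_iff int_matrix_def by (simp_all add: matrix_vector_mult_nth_2)

lemma e1_nth [simp]: "e1 $ 1 = 1" "e1 $ 2 = 0"
  and e2_nth [simp]: "e2 $ 1 = 0" "e2 $ 2 = 1"
  by (simp_all add: e1_def e2_def axis_def)

lemma mem_tpt_iff: "y \<in> tpt x \<longleftrightarrow> y - x \<in> latt"
  unfolding tpt_def by (auto simp: algebra_simps) (metis add.commute diff_add_cancel)

lemma tpt_eq_iff: "tpt x = tpt y \<longleftrightarrow> x - y \<in> latt"
proof
  assume "tpt x = tpt y"
  then have "x \<in> tpt y" using mem_tpt_iff zero_mem_latt by (metis diff_self)
  then show "x - y \<in> latt" by (simp add: mem_tpt_iff)
next
  assume "x - y \<in> latt"
  then have "z - y \<in> latt \<longleftrightarrow> z - x \<in> latt" for z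
    using add_mem_latt[of "z - x" "x - y"] diff_mem_latt[of "z - y" "x - y"] by auto
  then show "tpt x = tpt y" by (auto simp: mem_tpt_iff)
qed

lemma tpt_in_torus: "tpt x \<in> torus"
  unfolding torus_def by simp

lemma torusE:
  assumes "p \<in> torus"
  obtains x where "p = tpt x"
  using assms unfolding torus_def by blast

lemma aff_star_tpt:
  assumes "int_matrix A"
  shows "aff_star a A (tpt x) = tpt (a + A *v x)"
proof -
  define y where "y = (SOME y. y \<in> tpt x)"
  have "y \<in> tpt x" unfolding y_def by (rule someI[of _ x]) (simp add: mem_tpt_iff zero_mem_latt)
  then have "A *v (y - x) \<in> latt" by (simp add: mem_tpt_iff int_matrix_mult_mem_latt assms)
  then have "tpt (a + A *v y) = tpt (a + A *v x)"
    by (simp add: tpt_eq_iff matrix_vector_mult_diff_distrib)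
  then show ?thesis unfolding aff_star_def using tpt_in_torus y_def by simp
qed

lemma aff_star_in_torus: "int_matrix A \<Longrightarrow> p \<in> torus \<Longrightarrow> aff_star a A p \<in> torus"
  by (metis aff_star_tpt torusE tpt_in_torus)

lemma aff_star_cong:
  assumes "a - b \<in> latt" "int_matrix A"
  shows "aff_star a A = aff_star b A"
proof
  fix p
  show "aff_star a A p = aff_star b A p"
  proof (cases "p \<in> torus")
    case True
    then obtain x where "p = tpt x" by (rule torusE)
    then show ?thesis using assms by (simp add: aff_star_tpt tpt_eq_iff)
  next
    case False
    then show ?thesis by (simp add: aff_star_def)
  qed
qed

lemma aff_star_aff_star:
  assumes "int_matrix A" "int_matrix B" "p \<in> torus"
  shows "aff_star a A (aff_star b B p) = aff_star (a + A *v b) (A ** B) p"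
proof -
  obtain x where "p = tpt x" using assms(3) by (rule torusE)
  then show ?thesis
    using assms int_matrix_mult
    by (simp add: aff_star_tpt matrix_vector_right_distrib matrix_vector_mul_assoc add.assoc)
qed

lemma aff_star_0_mat_1: "p \<in> torus \<Longrightarrow> aff_star 0 (mat 1) p = p"
  using int_matrix_mat_1 by (metis aff_star_tpt torusE add_0 matrix_vector_mul_lid)

text \<open>The conjugator is \<open>\<psi> = (P s + P)\<^sub>\<star>\<close>; then \<open>\<psi> (f + X)\<^sub>\<star> \<psi>\<^sup>-\<^sup>1 = (P (f + s - X s) + K)\<^sub>\<star>\<close>.\<close>
lemma aff_conjI:
  assumes P: "GL2Z P" and X: "int_matrix X" and KP: "K ** P = P ** X"
    and k: "matrix_inv P *v k - (f + s - X *v s) \<in> latt"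
  shows "aff_conj (aff_star k K) (aff_star f X)"
proof -
  define Q where "Q = matrix_inv P"
  have PQ: "P ** Q = mat 1" "Q ** P = mat 1" "int_matrix P" "int_matrix Q"
    using P GL2Z_matrix_inv[OF P] unfolding Q_def GL2Z_def by (simp_all add: matrix_inv_left matrix_inv_right)
  have K: "K = P ** X ** Q"
    by (metis KP PQ(1) matrix_mul_assoc matrix_mul_rid)
  then have "int_matrix K" using PQ X int_matrix_mult by simp
  define \<psi> \<psi>' where "\<psi> = aff_star (P *v s) P" and "\<psi>' = aff_star (- s) Q"
  have "\<psi> \<in> Aff" "\<psi>' \<in> Aff" unfolding \<psi>_def \<psi>'_def Aff_def Q_def using P GL2Z_matrix_inv by auto
  moreover have "\<psi>' (\<psi> p) = p" "\<psi> (\<psi>' p) = p" if "p \<in> torus" for p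
    using that PQ aff_star_0_mat_1
    by (simp_all add: \<psi>_def \<psi>'_def aff_star_aff_star matrix_vector_mul_assoc matrix_vector_mult_minus_right)
  moreover have "aff_star k K p = \<psi> (aff_star f X (\<psi>' p))" if "p \<in> torus" for p
  proof -
    have "P *v (Q *v k - (f + s - X *v s)) \<in> latt"
      using k PQ(3) int_matrix_mult_mem_latt unfolding Q_def by blast
    then have "k - (P *v s + P *v (f + X *v (- s))) \<in> latt"
      using PQ(1) by (simp add: algebra_simps matrix_vector_mul_assoc matrix_vector_mult_minus_right
          matrix_vector_right_distrib)
    then have "aff_star k K = aff_star (P *v s + P *v (f + X *v (- s))) (P ** X ** Q)"
      using \<open>int_matrix K\<close> K aff_star_cong by blast
    then show ?thesis
      using that PQ X int_matrix_mult aff_star_in_torus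
      by (simp add: \<psi>_def \<psi>'_def aff_star_aff_star matrix_mul_assoc)
  qed
  ultimately show ?thesis unfolding aff_conj_def by blast
qed

lemma Aff_in_torus: "\<psi> \<in> Aff \<Longrightarrow> p \<in> torus \<Longrightarrow> \<psi> p \<in> torus"
  unfolding Aff_def GL2Z_def using aff_star_in_torus by blast

lemma aff_conj_fixed_point_iff:
  assumes "aff_conj \<kappa> \<phi>" "\<forall>p\<in>torus. \<phi> p \<in> torus"
  shows "(\<exists>p\<in>torus. \<kappa> p = p) \<longleftrightarrow> (\<exists>p\<in>torus. \<phi> p = p)"
proof -
  obtain \<psi> \<psi>' where \<psi>: "\<psi> \<in> Aff" "\<psi>' \<in> Aff" and inv: "\<forall>p\<in>torus. \<psi>' (\<psi> p) = p \<and> \<psi> (\<psi>' p) = p"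
    and \<kappa>: "\<forall>p\<in>torus. \<kappa> p = \<psi> (\<phi> (\<psi>' p))"
    using assms(1) unfolding aff_conj_def by (elim exE conjE) (rule that)
  show ?thesis
  proof
    assume "\<exists>p\<in>torus. \<kappa> p = p"
    then obtain p where p: "p \<in> torus" "\<kappa> p = p" by blast
    then have "\<phi> (\<psi>' p) = \<psi>' p"
      using \<kappa> inv assms(2) Aff_in_torus[OF \<psi>(2)] by metis
    then show "\<exists>p\<in>torus. \<phi> p = p" using Aff_in_torus[OF \<psi>(2) p(1)] by blast
  next
    assume "\<exists>p\<in>torus. \<phi> p = p"
    then obtain p where p: "p \<in> torus" "\<phi> p = p" by blast
    then have "\<kappa> (\<psi> p) = \<psi> p" using \<kappa> inv Aff_in_torus[OF \<psi>(1)] by metis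
    then show "\<exists>p\<in>torus. \<kappa> p = p" using Aff_in_torus[OF \<psi>(1) p(1)] by blast
  qed
qed

lemma aff_order2_latt: "aff_order2 (aff_star k K) \<Longrightarrow> int_matrix K \<Longrightarrow> k + K *v k \<in> latt"
  unfolding aff_order2_def using tpt_in_torus[of 0]
  by (auto simp: aff_star_tpt tpt_eq_iff)

lemma aff_order2_conj_latt:
  assumes "aff_order2 (aff_star k K)" "GL2Z P" "K ** P = P ** X" "int_matrix X"
  shows "matrix_inv P *v k + X *v (matrix_inv P *v k) \<in> latt"
proof -
  have inv: "P ** matrix_inv P = mat 1" "matrix_inv P ** P = mat 1" "int_matrix (matrix_inv P)"
    using assms(2) GL2Z_matrix_inv[OF assms(2)]
    unfolding GL2Z_def by (simp_all add: matrix_inv_left matrix_inv_right)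
  have XQ: "X ** matrix_inv P = matrix_inv P ** K"
    by (metis assms(3) inv(1,2) matrix_mul_assoc matrix_mul_lid matrix_mul_rid)
  have "int_matrix K"
    using assms(2-4) mat_conj_int_matrix unfolding mat_conj_iff by blast
  then have "matrix_inv P *v (k + K *v k) \<in> latt"
    using aff_order2_latt[OF assms(1)] inv(3) int_matrix_mult_mem_latt by blast
  then show ?thesis
    by (simp add: matrix_vector_right_distrib matrix_vector_mul_assoc XQ)
qed

lemma aff_conj_no_fixed_direction:
  assumes "mat_conj K X" "int_matrix X" "det (mat 1 - X) \<noteq> 0"
  shows "aff_conj (aff_star k K) (aff_star 0 X)"
proof -
  obtain P where P: "GL2Z P" "K ** P = P ** X" using assms(1) unfolding mat_conj_iff by blast
  define s where "s = matrix_inv (mat 1 - X) *v (matrix_inv P *v k)"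
  have "(mat 1 - X) *v s = matrix_inv P *v k"
    using assms(3) unfolding s_def invertible_det_nz[symmetric]
    by (simp add: matrix_vector_mul_assoc matrix_mul_assoc matrix_inv_right)
  then have "matrix_inv P *v k - (0 + s - X *v s) = 0"
    by (simp add: matrix_vector_mult_diff_rdistrib)
  then show ?thesis using aff_conjI[OF P(1) assms(2) P(2)] zero_mem_latt by metis
qed

lemma half_lattice_cases:
  assumes "k + k \<in> latt" "k \<notin> latt"
  shows "k - (1/2) *\<^sub>R e1 \<in> latt \<or> k - (1/2) *\<^sub>R e2 \<in> latt \<or> k - ((1/2) *\<^sub>R e1 + (1/2) *\<^sub>R e2) \<in> latt"
proof -
  have half: "k$i - 1/2 \<in> \<int>" if "k$i \<notin> \<int>" for i
  proof -
    have "2 * k$i \<in> \<int>" using assms(1) by (simp add: latt_def)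
    then show ?thesis using that by (rule Ints_minus_half)
  qed
  consider "k$1 \<notin> \<int>" "k$2 \<in> \<int>" | "k$1 \<in> \<int>" "k$2 \<notin> \<int>" | "k$1 \<notin> \<int>" "k$2 \<notin> \<int>"
    using assms(2) unfolding mem_latt_iff by blast
  then show ?thesis
    by cases (simp_all add: mem_latt_iff half)
qed

lemma aff_conj_half_translation:
  assumes "h \<in> {(1/2) *\<^sub>R e1, (1/2) *\<^sub>R e2, (1/2) *\<^sub>R e1 + (1/2) *\<^sub>R e2}"
  shows "aff_conj (aff_star h (mat 1)) (aff_star ((1/2) *\<^sub>R e1) (mat 1))"
proof -
  have conj: "aff_conj (aff_star h (mat 1)) (aff_star ((1/2) *\<^sub>R e1) (mat 1))"
    if "\<bar>a*d - b*c\<bar> = 1" "matrix_inv (imat a b c d) *v h - (1/2) *\<^sub>R e1 \<in> latt" for a b c d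
    using aff_conjI[where P = "imat a b c d" and X = "mat 1" and K = "mat 1" and s = 0] that
      int_matrix_mat_1 GL2Z_imat_iff by simp
  from assms consider "h = (1/2) *\<^sub>R e1" | "h = (1/2) *\<^sub>R e2" | "h = (1/2) *\<^sub>R e1 + (1/2) *\<^sub>R e2"
    by blast
  then show ?thesis
  proof cases
    case 1
    then show ?thesis using conj[where a = 1 and b = 0 and c = 0 and d = 1]
      by (simp add: matrix_inv_imat[where \<delta> = 1] mem_latt_iff matrix_vector_mult_nth_2)
  next
    case 2
    then show ?thesis using conj[where a = 0 and b = 1 and c = 1 and d = 0]
      by (simp add: matrix_inv_imat[where \<delta> = "-1"] mem_latt_iff matrix_vector_mult_nth_2)
  next
    case 3
    then show ?thesis using conj[where a = 1 and b = 0 and c = 1 and d = 1]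
      by (simp add: matrix_inv_imat[where \<delta> = 1] mem_latt_iff matrix_vector_mult_nth_2)
  qed
qed

lemma aff_order2_translation:
  assumes "aff_order2 (aff_star k (mat 1))"
  shows "aff_star k (mat 1) \<in> K2 \<and> aff_conj (aff_star k (mat 1)) (aff_star ((1/2) *\<^sub>R e1) (mat 1))"
proof -
  have "k + k \<in> latt" using aff_order2_latt[OF assms int_matrix_mat_1] by simp
  moreover have "k \<notin> latt"
  proof
    assume "k \<in> latt"
    then have "aff_star k (mat 1) = aff_star 0 (mat 1)" using aff_star_cong int_matrix_mat_1 by simp
    then show False using assms aff_star_0_mat_1 unfolding aff_order2_def by simp
  qed
  ultimately obtain h where h: "h \<in> {(1/2) *\<^sub>R e1, (1/2) *\<^sub>R e2, (1/2) *\<^sub>R e1 + (1/2) *\<^sub>R e2}" "k - h \<in> latt"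
    using half_lattice_cases by blast
  then have "aff_star k (mat 1) = aff_star h (mat 1)" using aff_star_cong int_matrix_mat_1 by blast
  then show ?thesis using h(1) aff_conj_half_translation unfolding K2_def by auto
qed

lemma aff_conj_mA_or_glide:
  assumes "mat_conj K mA" "aff_order2 (aff_star k K)"
  shows "aff_conj (aff_star k K) (aff_star 0 mA) \<or> aff_conj (aff_star k K) (aff_star ((1/2) *\<^sub>R e2) mA)"
proof -
  obtain P where P: "GL2Z P" "K ** P = P ** mA" using assms(1) unfolding mat_conj_iff by blast
  define k' where "k' = matrix_inv P *v k"
  have "k' + mA *v k' \<in> latt"
    using aff_order2_conj_latt[OF assms(2) P int_matrix_mA] unfolding k'_def .
  then have k'2: "2 * k'$2 \<in> \<int>" by (simp add: mem_latt_iff matrix_vector_mult_nth_2 mA_eq_imat)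
  define s where "s = (vector [k'$1 / 2, 0] :: real^2)"
  have conj: "aff_conj (aff_star k K) (aff_star f mA)" if "k' - (f + s - mA *v s) \<in> latt" for f
    using aff_conjI[OF P(1) int_matrix_mA P(2)] that unfolding k'_def by blast
  show ?thesis
  proof (cases "k'$2 \<in> \<int>")
    case True
    then have "k' - (0 + s - mA *v s) \<in> latt"
      by (simp add: s_def mem_latt_iff matrix_vector_mult_nth_2 mA_eq_imat)
    then show ?thesis using conj by blast
  next
    case False
    then have "k'$2 - 1/2 \<in> \<int>" using Ints_minus_half k'2 by blast
    then have "k' - ((1/2) *\<^sub>R e2 + s - mA *v s) \<in> latt"
      by (simp add: s_def mem_latt_iff matrix_vector_mult_nth_2 mA_eq_imat)
    then show ?thesis using conj by blast
  qed
qed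

lemma not_aff_conj_mA_and_glide:
  "\<not> (aff_conj \<kappa> (aff_star 0 mA) \<and> aff_conj \<kappa> (aff_star ((1/2) *\<^sub>R e2) mA))"
proof
  assume conj: "aff_conj \<kappa> (aff_star 0 mA) \<and> aff_conj \<kappa> (aff_star ((1/2) *\<^sub>R e2) mA)"
  have torus: "\<forall>p\<in>torus. aff_star f mA p \<in> torus" for f
    using aff_star_in_torus int_matrix_mA by blast
  have "aff_star 0 mA (tpt 0) = tpt 0" by (simp add: aff_star_tpt int_matrix_mA)
  then have "\<exists>p\<in>torus. aff_star 0 mA p = p" using tpt_in_torus by blast
  then have "\<exists>p\<in>torus. \<kappa> p = p"
    by (rule iffD2[OF aff_conj_fixed_point_iff[OF conjunct1[OF conj] torus]])
  then obtain p where p: "p \<in> torus" "aff_star ((1/2) *\<^sub>R e2) mA p = p"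
    using iffD1[OF aff_conj_fixed_point_iff[OF conjunct2[OF conj] torus]] by blast
  then obtain x where "p = tpt x" by (elim torusE)
  then have "(1/2 :: real) \<in> \<int>"
    using p(2) by (simp add: aff_star_tpt int_matrix_mA tpt_eq_iff mem_latt_iff matrix_vector_mult_nth_2 mA_eq_imat)
  then obtain m where "1/2 = (of_int m :: real)" by (rule Ints_cases)
  then have "of_int (2 * m) = (of_int 1 :: real)" by simp
  then have "2 * m = 1" by (simp only: of_int_eq_iff)
  then show False by presburger
qed

lemma aff_conj_mC:
  assumes "mat_conj K mC" "aff_order2 (aff_star k K)"
  shows "aff_conj (aff_star k K) (aff_star 0 mC)"
proof -
  obtain P where P: "GL2Z P" "K ** P = P ** mC" using assms(1) unfolding mat_conj_iff by blast
  define k' where "k' = matrix_inv P *v k"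
  have "k' + mC *v k' \<in> latt"
    using aff_order2_conj_latt[OF assms(2) P int_matrix_mC] unfolding k'_def .
  then have "k' - (0 + vector [k'$1, 0] - mC *v vector [k'$1, 0]) \<in> latt"
    by (simp add: mem_latt_iff matrix_vector_mult_nth_2 mC_eq_imat add.commute)
  then show ?thesis using aff_conjI[OF P(1) int_matrix_mC P(2)] unfolding k'_def by blast
qed

theorem lemma32:
  fixes k :: "real^2" and K :: "real^2^2" and \<kappa> :: "(real^2) set \<Rightarrow> (real^2) set"
  assumes "GL2Z K" and "\<kappa> = aff_star k K"
    and "\<exists>n>0. mpow K n = mat 1"
  shows "card {i. i < 7 \<and> mat_conj K ([mat 1, - mat 1, mA, mC, (mB ** mC) ** (mB ** mC), mA ** mC, mB ** mC] ! i)} = 1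
    \<and> (K = mat 1 \<and> aff_order2 \<kappa> \<longrightarrow> \<kappa> \<in> K2 \<and> aff_conj \<kappa> (aff_star ((1/2) *\<^sub>R e1) (mat 1)))
    \<and> (K = - mat 1 \<longrightarrow> aff_conj \<kappa> (aff_star 0 (- mat 1)))
    \<and> (mat_conj K mA \<and> aff_order2 \<kappa> \<longrightarrow>
         (aff_conj \<kappa> (aff_star 0 mA) \<noteq> aff_conj \<kappa> (aff_star ((1/2) *\<^sub>R e2) mA)))
    \<and> (mat_conj K mC \<and> aff_order2 \<kappa> \<longrightarrow> aff_conj \<kappa> (aff_star 0 mC))
    \<and> (mat_conj K ((mB ** mC) ** (mB ** mC)) \<longrightarrow> aff_conj \<kappa> (aff_star 0 ((mB ** mC) ** (mB ** mC))))
    \<and> (mat_conj K (mA ** mC) \<longrightarrow> aff_conj \<kappa> (aff_star 0 (mA ** mC)))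
    \<and> (mat_conj K (mB ** mC) \<longrightarrow> aff_conj \<kappa> (aff_star 0 (mB ** mC)))"
proof (intro conjI impI)
  have rigid: "aff_conj (aff_star k K) (aff_star 0 X)" if "mat_conj K X"
    and "X \<in> {- mat 1, (mB ** mC) ** (mB ** mC), mA ** mC, mB ** mC}" for X
    using aff_conj_no_fixed_direction[OF that(1)] that(2)
    by (auto simp: mA_eq_imat mB_eq_imat mC_eq_imat mat_1_eq_imat det_imat)
  show "card {i. i < 7 \<and> mat_conj K ([mat 1, - mat 1, mA, mC, (mB ** mC) ** (mB ** mC), mA ** mC, mB ** mC] ! i)} = 1"
    using card_conj_reps_eq_1[OF assms(1,3)] unfolding conj_reps_def .
  show "\<kappa> \<in> K2" "aff_conj \<kappa> (aff_star ((1/2) *\<^sub>R e1) (mat 1))" if "K = mat 1 \<and> aff_order2 \<kappa>"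
    using aff_order2_translation that unfolding assms(2) by auto
  show "aff_conj \<kappa> (aff_star 0 (- mat 1))" if "K = - mat 1"
    using rigid mat_conj_refl that unfolding assms(2) by auto
  show "aff_conj \<kappa> (aff_star 0 mA) \<noteq> aff_conj \<kappa> (aff_star ((1/2) *\<^sub>R e2) mA)"
    if "mat_conj K mA \<and> aff_order2 \<kappa>"
    using aff_conj_mA_or_glide not_aff_conj_mA_and_glide that unfolding assms(2) by blast
  show "aff_conj \<kappa> (aff_star 0 mC)" if "mat_conj K mC \<and> aff_order2 \<kappa>"
    using aff_conj_mC that unfolding assms(2) by blast
  show "aff_conj \<kappa> (aff_star 0 ((mB ** mC) ** (mB ** mC)))" if "mat_conj K ((mB ** mC) ** (mB ** mC))"
    using rigid that unfolding assms(2) by blast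
  show "aff_conj \<kappa> (aff_star 0 (mA ** mC))" if "mat_conj K (mA ** mC)"
    using rigid that unfolding assms(2) by blast
  show "aff_conj \<kappa> (aff_star 0 (mB ** mC))" if "mat_conj K (mB ** mC)"
    using rigid that unfolding assms(2) by blast
qed

end
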